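(* Let $I_0\ge1$ be an integer, let $\alpha_1,\dots,\alpha_{I_0-1}$ be non-negative reals, and let $0\le l<u$. For $x\ge0$ let $\beta^{(x)}$ be the family indexed by $\{1,2,\dots\}\cup\{\omega\}$ with $\beta^{(x)}_i=[i<I_0]\alpha_i+[i=I_0]x$. Then $\kappa_i(\beta^{(u)}_i)-\kappa_i(\beta^{(l)}_i)\le u-l$; explicitly, $$\sqrt{\alpha_1^{2^1}+\sqrt{\alpha_2^{2^2}+\dots+\sqrt{\alpha_{I_0-1}^{2^{I_0-1}}+u^{2^{I_0-1}}}}}-\sqrt{\alpha_1^{2^1}+\sqrt{\alpha_2^{2^2}+\dots+\sqrt{\alpha_{I_0-1}^{2^{I_0-1}}+l^{2^{I_0-1}}}}}\le u-l.$$
   Context: $[P]$ is the Iverson bracket ($1$ if $P$ holds, $0$ otherwise). For a family $(\alpha_i)$ of non-negative reals indexed by $\{1,2,\dots\}\cup\{\omega\}$ (with $n<\omega$ for all positive integers $n$), $\kappa_i(\alpha_i)$ is the limit of the approximants $P_0=\alpha_\omega$, $P_n=\sqrt{\alpha_1^{2^1}+\sqrt{\alpha_2^{2^2}+\dots+\sqrt{\alpha_n^{2^n}+\alpha_\omega^{2^n}}}}$ ($n$ nested roots). *)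

theory Defs
  imports Complex_Main
begin

text \<open>A family indexed by positive integers and omega is represented by a function
  a :: nat => real (only indices i >= 1 used) together with the value aw at omega.
  nest a aw m j = sqrt(a_j^(2^j) + sqrt(a_(j+1)^(2^(j+1)) + ... + sqrt(a_(j+m-1)^(2^(j+m-1)) + aw^(2^(j+m-1)))))
  with m nested roots; for m = 0 it is aw^(2^(j-1)).\<close>

fun nest :: "(nat \<Rightarrow> real) \<Rightarrow> real \<Rightarrow> nat \<Rightarrow> nat \<Rightarrow> real" where
  "nest a aw 0 j = aw ^ (2 ^ (j - 1))"
| "nest a aw (Suc m) j = sqrt (a j ^ (2 ^ j) + nest a aw m (Suc j))"

definition approx :: "(nat \<Rightarrow> real) \<Rightarrow> real \<Rightarrow> nat \<Rightarrow> real" where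
  "approx a aw n = nest a aw n 1"

definition kappa :: "(nat \<Rightarrow> real) \<Rightarrow> real \<Rightarrow> real" where
  "kappa a aw = lim (\<lambda>n. approx a aw n)"

end

theory Submission
  imports Defs
begin

text \<open>Once the family vanishes beyond I0, the approximants are eventually constant, so kappa
  is a finite nested radical. Taking the 2^(j-1)-th root of level j turns it into an iterated
  2^j-norm W j = (alpha j ^ 2^j + W (j+1) ^ 2^j) ^ (1/2^j), with W I0 = x and W 1 = kappa. The
  p-norm of a pair of non-negative reals is 1-Lipschitz in each coordinate, because the increments
  of t ^ p grow with t; hence x is mapped 1-Lipschitz to W 1.\<close>

lemma power_increment_mono:
  fixes b S d :: real
  assumes "0 \<le> b" "b \<le> S" "0 \<le> d"
  shows "(b + d) ^ p - b ^ p \<le> (S + d) ^ p - S ^ p"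
proof (induction p)
  case 0
  then show ?case by simp
next
  case (Suc p)
  have "(b + d) * ((b + d) ^ p - b ^ p) \<le> (S + d) * ((S + d) ^ p - S ^ p)"
    using Suc.IH assms by (intro mult_mono) (auto simp: power_mono)
  moreover have "d * b ^ p \<le> d * S ^ p"
    using assms by (simp add: mult_left_mono power_mono)
  moreover have "S * S ^ p \<le> (S + d) * (S + d) ^ p"
    using assms by (intro mult_mono) (auto simp: power_mono)
  ultimately show ?case by (simp add: algebra_simps)
qed

lemma root_power_sum_le_add:
  fixes a b b' d :: real
  assumes "p \<ge> 1" "0 \<le> a" "0 \<le> b" "0 \<le> b'" "0 \<le> d" "b' \<le> b + d"
  shows "root p (a ^ p + b' ^ p) \<le> root p (a ^ p + b ^ p) + d"
proof -
  define S where "S = root p (a ^ p + b ^ p)"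
  have S_nonneg: "S \<ge> 0" unfolding S_def using assms by simp
  have S_power: "S ^ p = a ^ p + b ^ p" unfolding S_def using assms
    by (simp add: real_root_pow_pos2)
  then have "b ^ p \<le> S ^ p" using assms by simp
  then have "b \<le> S" using S_nonneg assms power_mono_iff[of b S p] by simp
  have "a ^ p + b' ^ p \<le> a ^ p + (b + d) ^ p" using assms by (simp add: power_mono)
  also have "\<dots> \<le> (S + d) ^ p"
    using power_increment_mono[OF assms(3) \<open>b \<le> S\<close> assms(5), of p] S_power by simp
  finally have "root p (a ^ p + b' ^ p) \<le> root p ((S + d) ^ p)" using assms by simp
  also have "\<dots> = S + d" using S_nonneg assms by (simp add: real_root_power_cancel)
  finally show ?thesis unfolding S_def .
qed

fun nest_norm :: "(nat \<Rightarrow> real) \<Rightarrow> real \<Rightarrow> nat \<Rightarrow> nat \<Rightarrow> real" where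
  "nest_norm a x 0 j = x"
| "nest_norm a x (Suc m) j = root (2 ^ j) (a j ^ 2 ^ j + nest_norm a x m (Suc j) ^ 2 ^ j)"

lemma nest_norm_nonneg: "x \<ge> 0 \<Longrightarrow> j \<ge> 1 \<Longrightarrow> nest_norm a x m j \<ge> 0"
  by (induction m arbitrary: j) (simp_all add: zero_le_even_power)

lemma nest_norm_cong:
  "(\<And>i. j \<le> i \<Longrightarrow> i < j + m \<Longrightarrow> a i = b i) \<Longrightarrow> nest_norm a x m j = nest_norm b x m j"
  by (induction m arbitrary: j) auto

lemma nest_norm_lipschitz:
  assumes "0 \<le> l" "l \<le> u" "j \<ge> 1" "\<And>i. j \<le> i \<Longrightarrow> i < j + m \<Longrightarrow> a i \<ge> 0"
  shows "nest_norm a u m j \<le> nest_norm a l m j + (u - l)"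
  using assms
proof (induction m arbitrary: j)
  case 0
  then show ?case by simp
next
  case (Suc m)
  have "nest_norm a u m (Suc j) \<le> nest_norm a l m (Suc j) + (u - l)"
    using Suc.IH[of "Suc j"] Suc.prems by auto
  moreover have "(1::nat) \<le> 2 ^ j" "a j \<ge> 0" using Suc.prems by auto
  ultimately show ?case
    using root_power_sum_le_add[of "2 ^ j" "a j" "nest_norm a l m (Suc j)" "nest_norm a u m (Suc j)"]
      nest_norm_nonneg Suc.prems by auto
qed

lemma power_two_power_pred: "j \<ge> 1 \<Longrightarrow> (x::real) ^ 2 ^ j = (x ^ 2 ^ (j - 1))\<^sup>2"
  by (metis Suc_diff_le diff_Suc_1 power_Suc power_mult mult.commute)

lemma nest_eq_nest_norm_power:
  assumes "j \<ge> 1" "x \<ge> 0" "\<And>i. j \<le> i \<Longrightarrow> i < j + m \<Longrightarrow> a i \<ge> 0"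
  shows "nest a x m j = nest_norm a x m j ^ 2 ^ (j - 1)"
  using assms
proof (induction m arbitrary: j)
  case 0
  then show ?case by simp
next
  case (Suc m)
  define R where "R = nest_norm a x (Suc m) j"
  have "R \<ge> 0" unfolding R_def using nest_norm_nonneg Suc.prems by blast
  have "0 \<le> a j ^ 2 ^ j + nest_norm a x m (Suc j) ^ 2 ^ j"
    using Suc.prems nest_norm_nonneg[of x "Suc j" a m] by simp
  then have "R ^ 2 ^ j = a j ^ 2 ^ j + nest_norm a x m (Suc j) ^ 2 ^ j"
    unfolding R_def by (simp add: real_root_pow_pos2)
  also have "\<dots> = a j ^ 2 ^ j + nest a x m (Suc j)"
    using Suc.IH[of "Suc j"] Suc.prems by auto
  finally have "nest a x (Suc m) j = sqrt ((R ^ 2 ^ (j - 1))\<^sup>2)"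
    using power_two_power_pred[OF Suc.prems(1)] by simp
  then show ?case using \<open>R \<ge> 0\<close> unfolding R_def by simp
qed

lemma nest_zero_tail: "(\<And>i. i \<ge> j \<Longrightarrow> a i = 0) \<Longrightarrow> nest a 0 k j = 0"
  by (induction k arbitrary: j) auto

lemma nest_vanishing_tail:
  assumes "j \<ge> 1" "a (j + m) \<ge> 0" "\<And>i. i > j + m \<Longrightarrow> a i = 0"
  shows "nest a 0 (Suc m + k) j = nest a (a (j + m)) m j"
  using assms
proof (induction m arbitrary: j)
  case 0
  have "nest a 0 k (Suc j) = 0" using 0 by (intro nest_zero_tail) auto
  then show ?case using 0 power_two_power_pred[of j "a j"] by simp
next
  case (Suc m)
  then show ?case using Suc.IH[of "Suc j"] by simp
qed

lemma kappa_of_vanishing_tail: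
  assumes "N \<ge> 1" "a N \<ge> 0" "\<And>i. i > N \<Longrightarrow> a i = 0"
  shows "kappa a 0 = nest a (a N) (N - 1) 1"
proof -
  have "approx a 0 n = nest a (a N) (N - 1) 1" if "n \<ge> N" for n
    using nest_vanishing_tail[of 1 a "N - 1" "n - N"] assms that by (simp add: approx_def)
  then have "(\<lambda>n. approx a 0 n) \<longlonglongrightarrow> nest a (a N) (N - 1) 1"
    by (intro tendsto_eventually) (auto simp: eventually_sequentially)
  then show ?thesis unfolding kappa_def by (rule limI)
qed

theorem lemma5:
  fixes I0 :: nat and \<alpha> :: "nat \<Rightarrow> real" and l u :: real
  assumes "I0 \<ge> 1"
    and "\<And>i. 1 \<le> i \<Longrightarrow> i < I0 \<Longrightarrow> \<alpha> i \<ge> 0"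
    and "0 \<le> l" and "l < u"
  shows "kappa (\<lambda>i. of_bool (i < I0) * \<alpha> i + of_bool (i = I0) * u) 0
       - kappa (\<lambda>i. of_bool (i < I0) * \<alpha> i + of_bool (i = I0) * l) 0 \<le> u - l"
proof -
  have kappa_eq: "kappa (\<lambda>i. of_bool (i < I0) * \<alpha> i + of_bool (i = I0) * x) 0
      = nest_norm \<alpha> x (I0 - 1) 1" if "x \<ge> 0" for x
  proof -
    let ?\<beta> = "\<lambda>i. of_bool (i < I0) * \<alpha> i + of_bool (i = I0) * x"
    have "kappa ?\<beta> 0 = nest ?\<beta> x (I0 - 1) 1"
      using kappa_of_vanishing_tail[of I0 ?\<beta>] assms(1) that by simp
    also have "\<dots> = nest_norm ?\<beta> x (I0 - 1) 1"
      using nest_eq_nest_norm_power[of 1 x "I0 - 1" ?\<beta>] assms that by auto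
    also have "\<dots> = nest_norm \<alpha> x (I0 - 1) 1"
      by (rule nest_norm_cong) auto
    finally show ?thesis .
  qed
  have "nest_norm \<alpha> u (I0 - 1) 1 \<le> nest_norm \<alpha> l (I0 - 1) 1 + (u - l)"
    using assms by (intro nest_norm_lipschitz) auto
  then show ?thesis using kappa_eq assms by simp
qed

end
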